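(* Let $a,b$ be distinct real numbers, let $x_0\in\mathbb{R}$, and set $\lambda_n:=\frac{2n+3}{n+2}$ for all $n\in\mathbb{N}$ (so $\lambda_n\to2$ and $\sum_n(2-\lambda_n)=+\infty$). Define $(x_n)_{n\in\mathbb{N}}$ by \[ x_{2n+1}:=(1-\lambda_{2n})x_{2n}+\lambda_{2n}a,\qquad x_{2n+2}:=(1-\lambda_{2n+1})x_{2n+1}+\lambda_{2n+1}b . \] Then $x_{2n}\to \operatorname{sign}(b-a)\,\infty$ and $x_{2n+1}\to\operatorname{sign}(a-b)\,\infty$. *)

theory Defs
  imports "HOL-Analysis.Analysis"
begin

definition lam :: "nat \<Rightarrow> real" where
  "lam n = (2 * real n + 3) / (real n + 2)"

fun xseq :: "real \<Rightarrow> real \<Rightarrow> real \<Rightarrow> nat \<Rightarrow> real" where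
  "xseq a b x0 0 = x0"
| "xseq a b x0 (Suc n) =
     (1 - lam n) * xseq a b x0 n + lam n * (if even n then a else b)"

end

theory Submission
  imports Defs "HOL-Real_Asymp.Real_Asymp"
begin

text \<open>Since \<open>lam n = (2n+3)/(n+2)\<close>, multiplying the recursion by \<open>n+2\<close> gives
  \<open>(n+2) x(n+1) + (n+1) x(n) = (2n+3) c(n)\<close> with \<open>c(n) \<in> {a, b}\<close>. Over two steps the
  weighted even terms \<open>(2k+1) x(2k)\<close> therefore grow by \<open>(4k+5) b - (4k+3) a\<close>, which sums to
  \<open>x(2k) = (b-a) k + O(1)\<close>; one more step gives \<open>x(2k+1) = (a-b) k + O(1)\<close>.\<close>

lemma xseq_Suc_weighted:
  "(real n + 2) * xseq a b x0 (Suc n) + (real n + 1) * xseq a b x0 n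
     = (2 * real n + 3) * (if even n then a else b)"
proof -
  have lam: "(real n + 2) * lam n = 2 * real n + 3" "(real n + 2) * (1 - lam n) = - (real n + 1)"
    by (simp_all add: lam_def field_simps)
  have "(real n + 2) * xseq a b x0 (Suc n) = (real n + 2) * (1 - lam n) * xseq a b x0 n
      + (real n + 2) * lam n * (if even n then a else b)"
    by (simp only: xseq.simps distrib_left mult.assoc)
  then show ?thesis unfolding lam by (simp add: algebra_simps)
qed

lemma xseq_Suc_Suc_weighted:
  "(2 * real k + 3) * xseq a b x0 (2 * k + 2)
     = (2 * real k + 1) * xseq a b x0 (2 * k) - (4 * real k + 3) * a + (4 * real k + 5) * b"
proof -
  have "2 * k + 2 = Suc (Suc (2 * k))" by simp
  then show ?thesis
    using xseq_Suc_weighted[of "2 * k" a b x0] xseq_Suc_weighted[of "Suc (2 * k)" a b x0]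
    by (simp only:) (simp del: xseq.simps add: algebra_simps)
qed

lemma xseq_even_weighted:
  "(2 * real k + 1) * xseq a b x0 (2 * k) = x0 + (b - a) * (2 * real k ^ 2 + real k) + 2 * b * real k"
proof (induction k)
  case 0
  then show ?case by simp
next
  case (Suc k)
  have "2 * Suc k = 2 * k + 2" by simp
  then show ?case
    using xseq_Suc_Suc_weighted[of k a b x0] Suc.IH
    by (simp del: xseq.simps add: algebra_simps power2_eq_square)
qed

lemma xseq_even:
  "xseq a b x0 (2 * k) = (b - a) * real k + (x0 + 2 * b * real k) / (2 * real k + 1)"
proof -
  have "2 * real k + 1 > 0" by simp
  then show ?thesis
    using xseq_even_weighted[of k a b x0]
    by (simp del: xseq.simps add: field_simps power2_eq_square)
qed

lemma xseq_odd:
  "xseq a b x0 (2 * k + 1) = (a - b) * real k + ((3 * a - b) * real k + 3 * a - x0) / (2 * real k + 2)"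
proof -
  have "2 * real k + 2 > 0" by simp
  then show ?thesis
    using xseq_Suc_weighted[of "2 * k" a b x0] xseq_even_weighted[of k a b x0]
    by (simp del: xseq.simps add: field_simps power2_eq_square)
qed

theorem mainTheorem5:
  fixes a b x0 :: real
  assumes "a \<noteq> b"
  shows "(a < b \<longrightarrow>
            filterlim (\<lambda>n. xseq a b x0 (2*n)) at_top sequentially \<and>
            filterlim (\<lambda>n. xseq a b x0 (2*n+1)) at_bot sequentially) \<and>
         (b < a \<longrightarrow>
            filterlim (\<lambda>n. xseq a b x0 (2*n)) at_bot sequentially \<and>
            filterlim (\<lambda>n. xseq a b x0 (2*n+1)) at_top sequentially)"
  unfolding xseq_even xseq_odd by (intro conjI impI; real_asymp)

end
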